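(* Let $R=\mathbb{Z}[i]$ and $\mu_4=\{1,i,-1,-i\}\subset R^\times$ (with $\iota$ the inclusion). Then: (i) $X=1+2i$ is an $\mathbb{S}[\mu_{4,+}]$-generator of $R$, i.e. every element of $R$ is uniquely a finite sum $\sum_k\alpha_kX^k$ with $\alpha_k\in\{0,1,i,-1,-i\}$; (ii) the hold is given by $0+1=1$ and $1+1=i-iX$, $i+1=-i+X$, $-i+1=-1-iX$; (iii) the field $R_1=R/XR$ is the finite field $\mathbb{F}_5$; (iv) the projective limit $\varprojlim_mR_m$ (with $R_m=R/X^mR$) is the Witt ring $W(\mathbb{F}_5)=\mathbb{Z}_5$, and $R_m$ is the quotient of $W(\mathbb{F}_5)$ by $5^mW(\mathbb{F}_5)$.
   Context: The hold records, for each $\xi\in\mu_4$, the unique representation of $\xi+1$ as a finite sum $\sum_k\alpha_kX^k$ with $\alpha_k\in\mu_4\cup\{0\}$ (for $\xi=-1$ this is the empty sum). $W(\mathbb{F}_5)=\mathbb{Z}_5$ is the ring of $5$-adic integers. *)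

theory Defs
  imports Complex_Main "HOL-Algebra.Algebra"
begin

definition gauss_ring :: "complex ring" where
  "gauss_ring = \<lparr>carrier = {z. Re z \<in> \<int> \<and> Im z \<in> \<int>}, monoid.mult = (*), one = 1, ring.zero = 0, ring.add = (+)\<rparr>"

definition mu4_0 :: "complex set" where
  "mu4_0 = {0, 1, imaginary_unit, -1, -imaginary_unit}"

definition digit_rep :: "complex \<Rightarrow> (nat \<Rightarrow> complex) \<Rightarrow> complex \<Rightarrow> bool" where
  "digit_rep b a z \<longleftrightarrow> (\<forall>k. a k \<in> mu4_0) \<and> finite {k. a k \<noteq> 0}
      \<and> z = sum (\<lambda>k. a k * b ^ k) {k. a k \<noteq> 0}"

definition digits :: "complex \<Rightarrow> complex \<Rightarrow> (nat \<Rightarrow> complex)" where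
  "digits b z = (THE a. digit_rep b a z)"

text \<open>Projective limit of the tower of quotient rings A/I(m), with the natural projections
  A/I(m+1) -> A/I(m) (for a decreasing chain of ideals a coset of I(m+1) maps to the unique
  coset of I(m) containing it).\<close>
definition invlim :: "('a, 'b) ring_scheme \<Rightarrow> (nat \<Rightarrow> 'a set) \<Rightarrow> (nat \<Rightarrow> 'a set) ring" where
  "invlim A I = \<lparr>carrier = {f. \<forall>m. f m \<in> carrier (A Quot I m) \<and> f (Suc m) \<subseteq> f m},
      monoid.mult = (\<lambda>f g m. f m \<otimes>\<^bsub>A Quot I m\<^esub> g m),
      one = (\<lambda>m. \<one>\<^bsub>A Quot I m\<^esub>),
      ring.zero = (\<lambda>m. \<zero>\<^bsub>A Quot I m\<^esub>),
      ring.add = (\<lambda>f g m. f m \<oplus>\<^bsub>A Quot I m\<^esub> g m)\<rparr>"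

text \<open>The ring of 5-adic integers Z_5 = W(F_5) = lim Z/5^m Z.\<close>
definition Z5 :: "(nat \<Rightarrow> int set) ring" where
  "Z5 = invlim \<Z> (\<lambda>m. PIdl\<^bsub>\<Z>\<^esub> (5 ^ m))"

definition Z5_of_int :: "int \<Rightarrow> (nat \<Rightarrow> int set)" where
  "Z5_of_int k = (\<lambda>m. PIdl\<^bsub>\<Z>\<^esub> (5 ^ m) +>\<^bsub>\<Z>\<^esub> k)"

definition R_m :: "complex \<Rightarrow> nat \<Rightarrow> complex set ring" where
  "R_m b m = gauss_ring Quot (PIdl\<^bsub>gauss_ring\<^esub> (b ^ m))"

end

theory Submission
  imports Defs
begin

(* Write X = 1 + 2i, so that X * cnj X = 5.  The inclusion Z -> Z[i] induces isomorphisms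
   Z/5^m -> Z[i]/X^m: an integer k divisible by X^m satisfies 5^m | k * Im (X^m), and Im (X^m)
   is prime to 5; conversely i is congruent to an integer modulo X^m, by Bezout applied to
   Im (X^m) and 5^m.  These isomorphisms are compatible with the reduction maps, so they identify
   R_1 with F_5 and the inverse limit of the R_m with Z_5; and R_m = Z_5 / 5^m Z_5 because the
   kernel of Z_5 -> Z/5^m consists of the sequences divisible by 5^m.

   The digits 0, 1, i, -1, -i represent the five classes of Z[i] modulo X (u + iv has class
   u + 2v mod 5).  Writing z = d + X w with a digit d gives |X| |w| <= |z| + 1 < sqrt 5 |z| for
   z <> 0, so the expansion of z terminates; uniqueness follows by comparing lowest digits. *)

section \<open>Inverse limits of quotient rings\<close>

lemma invlim_carrier:
  "F \<in> carrier (invlim A I) \<longleftrightarrow> (\<forall>m. F m \<in> carrier (A Quot I m) \<and> F (Suc m) \<subseteq> F m)"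
  and invlim_add: "F \<oplus>\<^bsub>invlim A I\<^esub> G = (\<lambda>m. F m \<oplus>\<^bsub>A Quot I m\<^esub> G m)"
  and invlim_mult: "F \<otimes>\<^bsub>invlim A I\<^esub> G = (\<lambda>m. F m \<otimes>\<^bsub>A Quot I m\<^esub> G m)"
  and invlim_one: "\<one>\<^bsub>invlim A I\<^esub> = (\<lambda>m. \<one>\<^bsub>A Quot I m\<^esub>)"
  and invlim_zero: "\<zero>\<^bsub>invlim A I\<^esub> = (\<lambda>m. \<zero>\<^bsub>A Quot I m\<^esub>)"
  by (simp_all add: invlim_def)

lemma set_add_mono: "C \<subseteq> C' \<Longrightarrow> D \<subseteq> D' \<Longrightarrow> C <+>\<^bsub>R\<^esub> D \<subseteq> C' <+>\<^bsub>R\<^esub> D'"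
  unfolding set_add_def' by blast

lemma a_r_coset_mono: "H \<subseteq> H' \<Longrightarrow> H +>\<^bsub>R\<^esub> x \<subseteq> H' +>\<^bsub>R\<^esub> x"
  unfolding a_r_coset_def' by blast

lemma rcoset_mult_mono:
  "I \<subseteq> I' \<Longrightarrow> C \<subseteq> C' \<Longrightarrow> D \<subseteq> D' \<Longrightarrow> rcoset_mult R I C D \<subseteq> rcoset_mult R I' C' D'"
  unfolding rcoset_mult_def by (intro UN_mono a_r_coset_mono)

lemma a_set_inv_mono: "C \<subseteq> D \<Longrightarrow> a_set_inv\<^bsub>R\<^esub> C \<subseteq> a_set_inv\<^bsub>R\<^esub> D"
  unfolding A_SET_INV_def' by (rule UN_mono) simp_all

lemma invlim_carrierI:
  "(\<And>m. F m \<in> carrier (A Quot I m)) \<Longrightarrow> (\<And>m. F (Suc m) \<subseteq> F m) \<Longrightarrow> F \<in> carrier (invlim A I)"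
  by (simp add: invlim_carrier)

lemma invlim_carrierD:
  "F \<in> carrier (invlim A I) \<Longrightarrow> F m \<in> carrier (A Quot I m)"
  "F \<in> carrier (invlim A I) \<Longrightarrow> F (Suc m) \<subseteq> F m"
  by (simp_all add: invlim_carrier)

lemma FactRing_zero: "\<zero>\<^bsub>R Quot I\<^esub> = I"
  by (simp add: FactRing_def)

lemma (in ideal) rcos_eq_self_iff: "x \<in> carrier R \<Longrightarrow> I +> x = I \<longleftrightarrow> x \<in> I"
  using a_rcos_const a_rcos_self by blast

lemma (in ideal) rcos_mem_iff: "x \<in> carrier R \<Longrightarrow> y \<in> carrier R \<Longrightarrow> y \<in> I +> x \<longleftrightarrow> y \<ominus> x \<in> I"
  by (rule a_rcos_module_minus[OF ring_axioms])

locale ideal_chain = cring A for A (structure) +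
  fixes I :: "nat \<Rightarrow> 'a set"
  assumes ideal_chain: "ideal (I m) A"
    and chain_Suc_subset: "I (Suc m) \<subseteq> I m"
begin

lemma quotient_cring: "cring (A Quot I m)"
  by (rule ideal.quotient_is_cring[OF ideal_chain is_cring])

lemmas quotient_simprules =
  cring.cring_simprules[OF quotient_cring] monoid.r_one[OF ring.is_monoid[OF cring.axioms(1)[OF quotient_cring]]]

lemma abelian_subgroup_chain: "abelian_subgroup (I m) A"
proof -
  interpret ideal "I m" A by (rule ideal_chain)
  show ?thesis by (rule is_abelian_subgroup)
qed

lemma coset_Suc_subset_iff:
  assumes "x \<in> carrier A" "y \<in> carrier A"
  shows "I (Suc m) +> x \<subseteq> I m +> y \<longleftrightarrow> x \<ominus> y \<in> I m"
proof
  assume "I (Suc m) +> x \<subseteq> I m +> y"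
  then have "x \<in> I m +> y"
    using abelian_subgroup.a_rcos_self[OF abelian_subgroup_chain assms(1)] by blast
  then show "x \<ominus> y \<in> I m"
    using ideal.rcos_mem_iff[OF ideal_chain assms(2,1)] by simp
next
  assume "x \<ominus> y \<in> I m"
  then have "I m +> x = I m +> y"
    using quotient_eq_iff_same_a_r_cos[OF ideal_chain assms] by simp
  then show "I (Suc m) +> x \<subseteq> I m +> y"
    using a_r_coset_mono[OF chain_Suc_subset] by blast
qed

lemma invlim_add_closed:
  assumes "F \<in> carrier (invlim A I)" "G \<in> carrier (invlim A I)"
  shows "F \<oplus>\<^bsub>invlim A I\<^esub> G \<in> carrier (invlim A I)"
  unfolding invlim_add
proof (rule invlim_carrierI)
  show "F m \<oplus>\<^bsub>A Quot I m\<^esub> G m \<in> carrier (A Quot I m)" for m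
    using assms by (simp add: invlim_carrierD cring.cring_simprules(1)[OF quotient_cring])
  show "F (Suc m) \<oplus>\<^bsub>A Quot I (Suc m)\<^esub> G (Suc m) \<subseteq> F m \<oplus>\<^bsub>A Quot I m\<^esub> G m" for m
    using assms by (simp add: FactRing_def set_add_mono invlim_carrierD)
qed

lemma invlim_mult_closed:
  assumes "F \<in> carrier (invlim A I)" "G \<in> carrier (invlim A I)"
  shows "F \<otimes>\<^bsub>invlim A I\<^esub> G \<in> carrier (invlim A I)"
  unfolding invlim_mult
proof (rule invlim_carrierI)
  show "F m \<otimes>\<^bsub>A Quot I m\<^esub> G m \<in> carrier (A Quot I m)" for m
    using assms by (simp add: invlim_carrierD cring.cring_simprules(5)[OF quotient_cring])
  show "F (Suc m) \<otimes>\<^bsub>A Quot I (Suc m)\<^esub> G (Suc m) \<subseteq> F m \<otimes>\<^bsub>A Quot I m\<^esub> G m" for m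
    using assms by (simp add: FactRing_def rcoset_mult_mono chain_Suc_subset invlim_carrierD)
qed

lemma invlim_one_closed: "\<one>\<^bsub>invlim A I\<^esub> \<in> carrier (invlim A I)"
  unfolding invlim_one
  by (rule invlim_carrierI[OF cring.cring_simprules(6)[OF quotient_cring]])
    (simp add: FactRing_def a_r_coset_mono chain_Suc_subset)

lemma invlim_zero_closed: "\<zero>\<^bsub>invlim A I\<^esub> \<in> carrier (invlim A I)"
  unfolding invlim_zero
  by (rule invlim_carrierI[OF cring.cring_simprules(2)[OF quotient_cring]])
    (simp add: FactRing_def chain_Suc_subset)

lemma invlim_neg_exists:
  assumes F: "F \<in> carrier (invlim A I)"
  shows "\<exists>G\<in>carrier (invlim A I). G \<oplus>\<^bsub>invlim A I\<^esub> F = \<zero>\<^bsub>invlim A I\<^esub>"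
proof
  have coset: "F m \<in> a_rcosets (I m)" for m
    using invlim_carrierD(1)[OF F] by (simp add: FactRing_def)
  show "(\<lambda>m. a_set_inv (F m)) \<in> carrier (invlim A I)"
  proof (rule invlim_carrierI)
    show "a_set_inv (F m) \<in> carrier (A Quot I m)" for m
      using abelian_subgroup.a_setinv_closed[OF abelian_subgroup_chain coset] by (simp add: FactRing_def)
    show "a_set_inv (F (Suc m)) \<subseteq> a_set_inv (F m)" for m
      by (rule a_set_inv_mono) (rule invlim_carrierD(2)[OF F])
  qed
  show "(\<lambda>m. a_set_inv (F m)) \<oplus>\<^bsub>invlim A I\<^esub> F = \<zero>\<^bsub>invlim A I\<^esub>"
    using abelian_subgroup.a_rcosets_inv_mult_group_eq[OF abelian_subgroup_chain coset]
    by (simp add: invlim_add invlim_zero FactRing_def)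
qed

lemma invlim_cring: "cring (invlim A I)"
proof (rule cringI)
  show "abelian_group (invlim A I)"
  proof (rule abelian_groupI)
    show "\<zero>\<^bsub>invlim A I\<^esub> \<in> carrier (invlim A I)" by (rule invlim_zero_closed)
    show "F \<oplus>\<^bsub>invlim A I\<^esub> G \<in> carrier (invlim A I)"
      if "F \<in> carrier (invlim A I)" "G \<in> carrier (invlim A I)" for F G
      using that by (rule invlim_add_closed)
    show "\<exists>G\<in>carrier (invlim A I). G \<oplus>\<^bsub>invlim A I\<^esub> F = \<zero>\<^bsub>invlim A I\<^esub>"
      if "F \<in> carrier (invlim A I)" for F
      using that by (rule invlim_neg_exists)
  qed (auto simp: invlim_carrier invlim_add invlim_zero
      quotient_simprules)
  show "comm_monoid (invlim A I)"
  proof (rule comm_monoidI)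
    show "\<one>\<^bsub>invlim A I\<^esub> \<in> carrier (invlim A I)" by (rule invlim_one_closed)
    show "F \<otimes>\<^bsub>invlim A I\<^esub> G \<in> carrier (invlim A I)"
      if "F \<in> carrier (invlim A I)" "G \<in> carrier (invlim A I)" for F G
      using that by (rule invlim_mult_closed)
  qed (auto simp: invlim_carrier invlim_mult invlim_one
      quotient_simprules)
qed (auto simp: invlim_carrier invlim_mult invlim_add quotient_simprules)

lemma invlim_ring: "ring (invlim A I)"
  using invlim_cring cring.axioms(1) by blast

lemma invlim_antimono:
  assumes "F \<in> carrier (invlim A I)" "m \<le> n"
  shows "F n \<subseteq> F m"
  using assms(2) by (induction n rule: dec_induct) (use invlim_carrierD(2)[OF assms(1)] in blast)+

lemma coset_sequence_in_invlim: "a \<in> carrier A \<Longrightarrow> (\<lambda>m. I m +> a) \<in> carrier (invlim A I)"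
  by (rule invlim_carrierI) (auto simp: FactRing_def A_RCOSETS_def' a_r_coset_mono chain_Suc_subset)

lemma invlim_proj_hom: "ring_hom_ring (invlim A I) (A Quot I m) (\<lambda>F. F m)"
  by (rule ring_hom_ringI[OF invlim_ring ideal.quotient_is_ring[OF ideal_chain]])
    (simp_all add: invlim_carrierD invlim_add invlim_mult invlim_one)

lemma invlim_proj_surj: "(\<lambda>F. F m) ` carrier (invlim A I) = carrier (A Quot I m)"
proof
  show "(\<lambda>F. F m) ` carrier (invlim A I) \<subseteq> carrier (A Quot I m)"
    using invlim_carrierD(1) by blast
  show "carrier (A Quot I m) \<subseteq> (\<lambda>F. F m) ` carrier (invlim A I)"
    using coset_sequence_in_invlim by (force simp: FactRing_def A_RCOSETS_def')
qed

lemma invlim_quotient_iso: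
  "A Quot I m \<simeq> invlim A I Quot {F \<in> carrier (invlim A I). F m = I m}"
proof -
  have kernel: "a_kernel (invlim A I) (A Quot I m) (\<lambda>F. F m) = {F \<in> carrier (invlim A I). F m = I m}"
    by (simp add: a_kernel_def' FactRing_def)
  have iso: "invlim A I Quot {F \<in> carrier (invlim A I). F m = I m} \<simeq> A Quot I m"
    using ring_hom_ring.FactRing_iso[OF invlim_proj_hom[of m] invlim_proj_surj] unfolding kernel .
  have "ring (invlim A I Quot {F \<in> carrier (invlim A I). F m = I m})"
    using ideal.quotient_is_ring[OF ring_hom_ring.kernel_is_ideal[OF invlim_proj_hom[of m]]]
    unfolding kernel .
  then show ?thesis
    using iso by (rule ring_iso_sym)
qed

end

lemma invlim_ring_iso:
  assumes iso: "\<And>m. h m \<in> ring_iso (A Quot I m) (B Quot J m)"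
    and subset_iff: "\<And>m C D. C \<in> carrier (A Quot I (Suc m)) \<Longrightarrow> D \<in> carrier (A Quot I m) \<Longrightarrow>
      h (Suc m) C \<subseteq> h m D \<longleftrightarrow> C \<subseteq> D"
  shows "(\<lambda>F m. h m (F m)) \<in> ring_iso (invlim A I) (invlim B J)"
proof -
  have bij: "bij_betw (h m) (carrier (A Quot I m)) (carrier (B Quot J m))" for m
    using ring_iso_memE(5)[OF iso] .
  have image: "(\<lambda>m. h m (F m)) \<in> carrier (invlim B J)" if "F \<in> carrier (invlim A I)" for F
    using that ring_iso_memE(1)[OF iso] subset_iff by (intro invlim_carrierI) (simp_all add: invlim_carrierD)
  have "bij_betw (\<lambda>F m. h m (F m)) (carrier (invlim A I)) (carrier (invlim B J))"
  proof (rule bij_betw_byWitness)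
    define g where "g m = inv_into (carrier (A Quot I m)) (h m)" for m
    have g: "g m D \<in> carrier (A Quot I m)" "h m (g m D) = D" if "D \<in> carrier (B Quot J m)" for m D
      using that bij[of m] unfolding g_def by (auto simp: bij_betw_def inv_into_into f_inv_into_f)
    show "\<forall>F\<in>carrier (invlim A I). (\<lambda>m. g m (h m (F m))) = F"
      using bij unfolding g_def by (auto simp: bij_betw_def invlim_carrierD)
    show "\<forall>G\<in>carrier (invlim B J). (\<lambda>m. h m (g m (G m))) = G"
      using g by (auto simp: invlim_carrierD)
    show "(\<lambda>F m. h m (F m)) ` carrier (invlim A I) \<subseteq> carrier (invlim B J)"
      using image by blast
    show "(\<lambda>G m. g m (G m)) ` carrier (invlim B J) \<subseteq> carrier (invlim A I)"
    proof clarify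
      fix G assume G: "G \<in> carrier (invlim B J)"
      have gG: "g m (G m) \<in> carrier (A Quot I m)" "h m (g m (G m)) = G m" for m
        using g invlim_carrierD(1)[OF G] by blast+
      show "(\<lambda>m. g m (G m)) \<in> carrier (invlim A I)"
        using gG subset_iff[OF gG(1) gG(1)] invlim_carrierD(2)[OF G] by (intro invlim_carrierI) simp_all
    qed
  qed
  then show ?thesis
    using image ring_iso_memE(2-4)[OF iso]
    by (intro ring_iso_memI) (auto simp: invlim_mult invlim_add invlim_one invlim_carrierD)
qed

locale ideal_chain_hom = A: ideal_chain A I + B: ideal_chain B J + ring_hom_cring A B \<phi>
  for A (structure) and I and B (structure) and J and \<phi> +
  assumes vimage_chain: "\<And>a m. a \<in> carrier A \<Longrightarrow> \<phi> a \<in> J m \<longleftrightarrow> a \<in> I m"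
    and surjective_mod_chain: "\<And>b m. b \<in> carrier B \<Longrightarrow> \<exists>a\<in>carrier A. b \<ominus>\<^bsub>B\<^esub> \<phi> a \<in> J m"
begin

definition induced where
  "induced m C = the_elem ((\<lambda>a. J m +>\<^bsub>B\<^esub> \<phi> a) ` C)"

lemma coset_hom: "ring_hom_ring A (B Quot J m) (\<lambda>a. J m +>\<^bsub>B\<^esub> \<phi> a)"
  using ring_hom_trans[OF homh ideal.rcos_ring_hom[OF B.ideal_chain]]
  by (intro ring_hom_ringI2 A.ring_axioms ideal.quotient_is_ring[OF B.ideal_chain]) (simp add: comp_def)

lemma coset_hom_kernel: "a_kernel A (B Quot J m) (\<lambda>a. J m +>\<^bsub>B\<^esub> \<phi> a) = I m"
proof -
  have "a_kernel A (B Quot J m) (\<lambda>a. J m +>\<^bsub>B\<^esub> \<phi> a) = {a \<in> carrier A. J m +>\<^bsub>B\<^esub> \<phi> a = J m}"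
    by (simp only: a_kernel_def' FactRing_zero)
  also have "\<dots> = {a \<in> carrier A. a \<in> I m}"
  proof (rule Collect_cong)
    fix a
    show "a \<in> carrier A \<and> J m +>\<^bsub>B\<^esub> \<phi> a = J m \<longleftrightarrow> a \<in> carrier A \<and> a \<in> I m"
      using ideal.rcos_eq_self_iff[OF B.ideal_chain hom_closed, of a] vimage_chain[of a m] by blast
  qed
  also have "\<dots> = I m"
    using ideal.Icarr[OF A.ideal_chain, of _ m] by blast
  finally show ?thesis .
qed

lemma coset_hom_surj: "(\<lambda>a. J m +>\<^bsub>B\<^esub> \<phi> a) ` carrier A = carrier (B Quot J m)"
proof
  show "(\<lambda>a. J m +>\<^bsub>B\<^esub> \<phi> a) ` carrier A \<subseteq> carrier (B Quot J m)"
    by (auto simp: FactRing_def A_RCOSETS_def')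
  show "carrier (B Quot J m) \<subseteq> (\<lambda>a. J m +>\<^bsub>B\<^esub> \<phi> a) ` carrier A"
  proof
    fix C assume "C \<in> carrier (B Quot J m)"
    then obtain b where b: "b \<in> carrier B" "C = J m +>\<^bsub>B\<^esub> b"
      by (auto simp: FactRing_def A_RCOSETS_def')
    obtain a where a: "a \<in> carrier A" "b \<ominus>\<^bsub>B\<^esub> \<phi> a \<in> J m"
      using surjective_mod_chain[OF b(1)] by blast
    then have "C = J m +>\<^bsub>B\<^esub> \<phi> a"
      using b B.quotient_eq_iff_same_a_r_cos[OF B.ideal_chain] by simp
    then show "C \<in> (\<lambda>a. J m +>\<^bsub>B\<^esub> \<phi> a) ` carrier A"
      using a(1) by blast
  qed
qed

lemma induced_ring_iso: "induced m \<in> ring_iso (A Quot I m) (B Quot J m)"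
  using ring_hom_ring.FactRing_iso_set[OF coset_hom coset_hom_surj]
  unfolding induced_def coset_hom_kernel .

lemma induced_coset: "a \<in> carrier A \<Longrightarrow> induced m (I m +> a) = J m +>\<^bsub>B\<^esub> \<phi> a"
  using ring_hom_ring.the_elem_simp[OF coset_hom]
  unfolding induced_def coset_hom_kernel .

lemma induced_Suc_subset_iff:
  assumes "C \<in> carrier (A Quot I (Suc m))" "D \<in> carrier (A Quot I m)"
  shows "induced (Suc m) C \<subseteq> induced m D \<longleftrightarrow> C \<subseteq> D"
proof -
  obtain a a' where a: "a \<in> carrier A" "C = I (Suc m) +> a" and a': "a' \<in> carrier A" "D = I m +> a'"
    using assms by (auto simp: FactRing_def A_RCOSETS_def')
  have "\<phi> a \<ominus>\<^bsub>B\<^esub> \<phi> a' = \<phi> (a \<ominus> a')"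
    using a(1) a'(1) by (simp add: a_minus_def)
  then show ?thesis
    using a a' vimage_chain[of "a \<ominus> a'"] A.coset_Suc_subset_iff B.coset_Suc_subset_iff
    by (simp add: induced_coset)
qed

theorem quotient_iso: "A Quot I m \<simeq> B Quot J m"
  using induced_ring_iso unfolding is_ring_iso_def by blast

theorem invlim_iso: "invlim A I \<simeq> invlim B J"
  using invlim_ring_iso[where h = induced, OF induced_ring_iso induced_Suc_subset_iff] unfolding is_ring_iso_def by blast

end

lemma field_ring_iso:
  assumes "field R" "ring S" "R \<simeq> S"
  shows "field S"
proof -
  obtain h where h: "h \<in> ring_iso R S"
    using assms(3) unfolding is_ring_iso_def by blast
  then have "h \<zero>\<^bsub>R\<^esub> = \<zero>\<^bsub>S\<^esub>"
    using ring_hom_zero[of h R S] assms(1,2) field.is_ring by (auto simp: ring_iso_def)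
  then show ?thesis
    using field.ring_iso_imp_img_field[OF assms(1) h] by simp
qed

section \<open>Integers and \<open>p\<close>-adic integers\<close>

lemma int_PIdl_iff [simp]: "k \<in> PIdl\<^bsub>\<Z>\<^esub> n \<longleftrightarrow> n dvd k"
  by (auto simp: cgenideal_def dvd_def mult.commute)

lemma int_rcos_mem_iff: "k \<in> PIdl\<^bsub>\<Z>\<^esub> n +>\<^bsub>\<Z>\<^esub> j \<longleftrightarrow> n dvd k - j"
  using ideal.rcos_mem_iff[OF int.cgenideal_ideal] by (simp add: int_a_minus_eq)

lemma int_rcos_eq_iff: "PIdl\<^bsub>\<Z>\<^esub> n +>\<^bsub>\<Z>\<^esub> j = PIdl\<^bsub>\<Z>\<^esub> n +>\<^bsub>\<Z>\<^esub> k \<longleftrightarrow> n dvd j - k"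
  using int.quotient_eq_iff_same_a_r_cos[OF int.cgenideal_ideal] by simp

lemma int_power_ideal_chain: "ideal_chain \<Z> (\<lambda>m. PIdl\<^bsub>\<Z>\<^esub> (p ^ m))"
  by (intro ideal_chain.intro ideal_chain_axioms.intro int_is_cring int.cgenideal_ideal)
    (auto simp: dvd_mult_right)

abbreviation padic_integers :: "int \<Rightarrow> (nat \<Rightarrow> int set) ring" where
  "padic_integers p \<equiv> invlim \<Z> (\<lambda>m. PIdl\<^bsub>\<Z>\<^esub> (p ^ m))"

abbreviation padic_of_int :: "int \<Rightarrow> int \<Rightarrow> nat \<Rightarrow> int set" where
  "padic_of_int p k \<equiv> \<lambda>m. PIdl\<^bsub>\<Z>\<^esub> (p ^ m) +>\<^bsub>\<Z>\<^esub> k"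

lemma int_rcos_mult:
  "(PIdl\<^bsub>\<Z>\<^esub> n +>\<^bsub>\<Z>\<^esub> j) \<otimes>\<^bsub>\<Z> Quot PIdl\<^bsub>\<Z>\<^esub> n\<^esub> (PIdl\<^bsub>\<Z>\<^esub> n +>\<^bsub>\<Z>\<^esub> k) =
    PIdl\<^bsub>\<Z>\<^esub> n +>\<^bsub>\<Z>\<^esub> (j * k)"
  using ideal.rcoset_mult_add[OF int.cgenideal_ideal] by (simp add: FactRing_def)

lemma padic_vanishing_imp_divisible:
  fixes p :: int
  assumes "p \<noteq> 0" and F: "F \<in> carrier (padic_integers p)" and Fm: "F m = PIdl\<^bsub>\<Z>\<^esub> (p ^ m)"
  shows "\<exists>G\<in>carrier (padic_integers p). F = G \<otimes>\<^bsub>padic_integers p\<^esub> padic_of_int p (p ^ m)"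
proof -
  interpret ideal_chain \<Z> "\<lambda>m. PIdl\<^bsub>\<Z>\<^esub> (p ^ m)" by (rule int_power_ideal_chain)
  obtain r where r: "\<And>n. F n = PIdl\<^bsub>\<Z>\<^esub> (p ^ n) +>\<^bsub>\<Z>\<^esub> r n"
    using invlim_carrierD(1)[OF F] by (simp add: FactRing_def A_RCOSETS_def') metis
  have r_mem: "r n' \<in> F n" if "n \<le> n'" for n n'
    using invlim_antimono[OF F that] r[of n'] int_rcos_mem_iff by auto
  define g where "g n = r (n + m) div p ^ m" for n
  have r_eq: "r (n + m) = g n * p ^ m" for n
    using r_mem[of m "n + m"] unfolding Fm g_def by simp
  define G where "G n = PIdl\<^bsub>\<Z>\<^esub> (p ^ n) +>\<^bsub>\<Z>\<^esub> g n" for n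
  have "G \<in> carrier (padic_integers p)"
  proof (rule invlim_carrierI)
    show "G n \<in> carrier (\<Z> Quot PIdl\<^bsub>\<Z>\<^esub> (p ^ n))" for n
      by (auto simp: G_def FactRing_def A_RCOSETS_def')
    show "G (Suc n) \<subseteq> G n" for n
    proof -
      have "p ^ (n + m) dvd r (Suc n + m) - r (n + m)"
        using invlim_carrierD(2)[OF F, of "n + m"] r coset_Suc_subset_iff by simp
      then have "p ^ n * p ^ m dvd (g (Suc n) - g n) * p ^ m"
        by (simp only: r_eq power_add left_diff_distrib)
      then show ?thesis
        using assms(1) coset_Suc_subset_iff by (simp add: G_def)
    qed
  qed
  moreover have "F = G \<otimes>\<^bsub>padic_integers p\<^esub> padic_of_int p (p ^ m)"
  proof
    fix n
    have "F n = PIdl\<^bsub>\<Z>\<^esub> (p ^ n) +>\<^bsub>\<Z>\<^esub> r (n + m)"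
      using r_mem[of n "n + m"] r[of n] int_rcos_mem_iff int_rcos_eq_iff
      by (simp add: dvd_diff_commute)
    then show "F n = (G \<otimes>\<^bsub>padic_integers p\<^esub> padic_of_int p (p ^ m)) n"
      by (simp add: invlim_mult G_def int_rcos_mult r_eq)
  qed
  ultimately show ?thesis
    by blast
qed

lemma padic_proj_kernel:
  fixes p :: int
  assumes "p \<noteq> 0"
  shows "{F \<in> carrier (padic_integers p). F m = PIdl\<^bsub>\<Z>\<^esub> (p ^ m)} =
    PIdl\<^bsub>padic_integers p\<^esub> (padic_of_int p (p ^ m))"
proof (intro equalityI subsetI)
  fix F assume "F \<in> {F \<in> carrier (padic_integers p). F m = PIdl\<^bsub>\<Z>\<^esub> (p ^ m)}"
  then obtain G where "G \<in> carrier (padic_integers p)" "F = G \<otimes>\<^bsub>padic_integers p\<^esub> padic_of_int p (p ^ m)"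
    using padic_vanishing_imp_divisible[OF assms] by blast
  then show "F \<in> PIdl\<^bsub>padic_integers p\<^esub> (padic_of_int p (p ^ m))"
    unfolding cgenideal_def by blast
next
  fix F assume "F \<in> PIdl\<^bsub>padic_integers p\<^esub> (padic_of_int p (p ^ m))"
  then obtain G where G: "G \<in> carrier (padic_integers p)"
    and F: "F = G \<otimes>\<^bsub>padic_integers p\<^esub> padic_of_int p (p ^ m)"
    by (auto simp: cgenideal_def)
  obtain k where k: "G m = PIdl\<^bsub>\<Z>\<^esub> (p ^ m) +>\<^bsub>\<Z>\<^esub> k"
    using invlim_carrierD(1)[OF G] by (auto simp: FactRing_def A_RCOSETS_def')
  have "F m = PIdl\<^bsub>\<Z>\<^esub> (p ^ m)"
    using ideal.rcos_eq_self_iff[OF int.cgenideal_ideal] by (simp add: F invlim_mult k int_rcos_mult)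
  moreover have "F \<in> carrier (padic_integers p)"
    unfolding F using G ideal_chain.coset_sequence_in_invlim[OF int_power_ideal_chain]
    by (intro ideal_chain.invlim_mult_closed[OF int_power_ideal_chain]) simp_all
  ultimately show "F \<in> {F \<in> carrier (padic_integers p). F m = PIdl\<^bsub>\<Z>\<^esub> (p ^ m)}"
    by simp
qed

lemma padic_quotient_iso:
  fixes p :: int
  assumes "p \<noteq> 0"
  shows "\<Z> Quot PIdl\<^bsub>\<Z>\<^esub> (p ^ m) \<simeq> padic_integers p Quot PIdl\<^bsub>padic_integers p\<^esub> (padic_of_int p (p ^ m))"
  using ideal_chain.invlim_quotient_iso[OF int_power_ideal_chain, of p m]
  unfolding padic_proj_kernel[OF assms] .

lemma int_prime_maximalideal:
  fixes p :: int
  assumes "Factorial_Ring.prime p"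
  shows "maximalideal (PIdl\<^bsub>\<Z>\<^esub> p) \<Z>"
proof (rule maximalidealI)
  show "ideal (PIdl\<^bsub>\<Z>\<^esub> p) \<Z>"
    by (rule int.cgenideal_ideal) simp
  show "carrier \<Z> \<noteq> PIdl\<^bsub>\<Z>\<^esub> p"
  proof
    assume "carrier \<Z> = PIdl\<^bsub>\<Z>\<^esub> p"
    then have "p dvd 1"
      using int_PIdl_iff[of 1 p] by simp
    then show False
      using assms not_prime_unit by blast
  qed
next
  fix J assume J: "ideal J \<Z>" "PIdl\<^bsub>\<Z>\<^esub> p \<subseteq> J" "J \<subseteq> carrier \<Z>"
  show "J = PIdl\<^bsub>\<Z>\<^esub> p \<or> J = carrier \<Z>"
  proof (cases "J \<subseteq> PIdl\<^bsub>\<Z>\<^esub> p")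
    case True
    then show ?thesis using J(2) by blast
  next
    case False
    then obtain k where k: "k \<in> J" "\<not> p dvd k"
      by (auto simp: subset_iff)
    then have "coprime p k"
      using assms by (simp add: prime_imp_coprime)
    then obtain u v where uv: "u * p + v * k = 1"
      using bezout_int[of p k] by (metis coprime_iff_gcd_eq_1)
    have "p \<in> J"
      using J(2) by (auto simp: subset_iff)
    then have "u * p + v * k \<in> J"
      using k(1) ideal.I_l_closed[OF J(1)] additive_subgroup.a_closed[OF ideal.axioms(1)[OF J(1)]]
      by simp
    then have "\<one>\<^bsub>\<Z>\<^esub> \<in> J"
      using uv by simp
    then show ?thesis
      using ideal.one_imp_carrier[OF J(1)] by blast
  qed
qed

lemma ZFact_prime_field: "Factorial_Ring.prime p \<Longrightarrow> field (ZFact p)"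
  unfolding ZFact_def int.cgenideal_eq_genideal[OF UNIV_I, symmetric]
  by (rule maximalideal.quotient_is_field[OF int_prime_maximalideal int_is_cring])

section \<open>Gaussian integers modulo powers of \<open>1 + 2i\<close>\<close>

lemma gauss_ring_carrier [simp]: "z \<in> carrier gauss_ring \<longleftrightarrow> Re z \<in> \<int> \<and> Im z \<in> \<int>"
  and gauss_ring_ops [simp]: "x \<otimes>\<^bsub>gauss_ring\<^esub> y = x * y" "x \<oplus>\<^bsub>gauss_ring\<^esub> y = x + y"
    "\<one>\<^bsub>gauss_ring\<^esub> = 1" "\<zero>\<^bsub>gauss_ring\<^esub> = 0"
  by (simp_all add: gauss_ring_def)

lemma gauss_ringE:
  assumes "z \<in> carrier gauss_ring"
  obtains u v :: int where "z = Complex (of_int u) (of_int v)"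
proof -
  obtain u v :: int where "Re z = of_int u" "Im z = of_int v"
    using assms by (auto elim!: Ints_cases)
  then show thesis
    by (intro that[of u v]) (simp add: complex_eq_iff)
qed

lemma gauss_ring_cring: "cring gauss_ring"
proof (rule cringI)
  show "abelian_group gauss_ring"
  proof (rule abelian_groupI)
    show "\<exists>y\<in>carrier gauss_ring. y \<oplus>\<^bsub>gauss_ring\<^esub> x = \<zero>\<^bsub>gauss_ring\<^esub>" if "x \<in> carrier gauss_ring" for x
      using that by (intro bexI[of _ "- x"]) auto
  qed auto
  show "comm_monoid gauss_ring"
    by (rule comm_monoidI) (auto simp: mult.commute)
qed (auto simp: distrib_right)

lemma gauss_ring_minus [simp]:
  "x \<in> carrier gauss_ring \<Longrightarrow> y \<in> carrier gauss_ring \<Longrightarrow> x \<ominus>\<^bsub>gauss_ring\<^esub> y = x - y"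
  using abelian_group.minus_equality[OF ring.is_abelian_group[OF cring.axioms(1)[OF gauss_ring_cring]], of "- y" y]
  by (simp add: a_minus_def)

lemma gauss_PIdl_iff: "z \<in> PIdl\<^bsub>gauss_ring\<^esub> w \<longleftrightarrow> (\<exists>x\<in>carrier gauss_ring. z = x * w)"
  by (auto simp: cgenideal_def)

lemma gauss_ring_closed:
  "x \<in> carrier gauss_ring \<Longrightarrow> y \<in> carrier gauss_ring \<Longrightarrow> x + y \<in> carrier gauss_ring"
  "x \<in> carrier gauss_ring \<Longrightarrow> y \<in> carrier gauss_ring \<Longrightarrow> x * y \<in> carrier gauss_ring"
  "x \<in> carrier gauss_ring \<Longrightarrow> x ^ n \<in> carrier gauss_ring"
  "x \<in> carrier gauss_ring \<Longrightarrow> cnj x \<in> carrier gauss_ring"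
proof -
  show "x + y \<in> carrier gauss_ring" if "x \<in> carrier gauss_ring" "y \<in> carrier gauss_ring" for x y
    using that by (auto intro: Ints_add)
  show mult: "x * y \<in> carrier gauss_ring" if "x \<in> carrier gauss_ring" "y \<in> carrier gauss_ring" for x y
    using that by (auto intro: Ints_mult Ints_diff Ints_add)
  show "x ^ n \<in> carrier gauss_ring" if "x \<in> carrier gauss_ring" for x
    using that mult by (induction n) simp_all
  show "cnj x \<in> carrier gauss_ring" if "x \<in> carrier gauss_ring" for x
    using that by simp
qed

lemma gauss_ring_sum_closed:
  "(\<And>k. k \<in> K \<Longrightarrow> f k \<in> carrier gauss_ring) \<Longrightarrow> sum f K \<in> carrier gauss_ring"
  by (auto simp: Re_sum Im_sum intro: Ints_sum)

lemma gauss_ring_norm_ge_1: "z \<in> carrier gauss_ring \<Longrightarrow> z \<noteq> 0 \<Longrightarrow> 1 \<le> cmod z"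
proof -
  assume z: "z \<in> carrier gauss_ring" "z \<noteq> 0"
  then have "1 \<le> \<bar>Re z\<bar> \<or> 1 \<le> \<bar>Im z\<bar>"
    using Ints_nonzero_abs_ge1 by (auto simp: complex_eq_iff)
  then show "1 \<le> cmod z"
    using abs_Re_le_cmod[of z] abs_Im_le_cmod[of z] by linarith
qed

abbreviation \<beta> :: complex where "\<beta> \<equiv> 1 + 2 * \<i>"

lemma beta_power_coords_mod_5:
  "1 \<le> m \<Longrightarrow> \<exists>x y. \<beta> ^ m = Complex (of_int x) (of_int y) \<and> 5 dvd y - 2 * x \<and> \<not> 5 dvd x"
proof (induction m rule: nat_induct_at_least)
  case base
  show ?case by (intro exI[of _ 1] exI[of _ 2]) (simp add: complex_eq_iff)
next
  case (Suc m)
  then obtain x y :: int where xy: "\<beta> ^ m = Complex x y" "5 dvd y - 2 * x" "\<not> 5 dvd x"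
    by blast
  have "\<beta> ^ Suc m = Complex (of_int (x - 2 * y)) (of_int (2 * x + y))"
    using xy(1) by (simp add: complex_eq_iff)
  moreover have "5 dvd (2 * x + y) - 2 * (x - 2 * y)" "\<not> 5 dvd x - 2 * y"
    using xy(2,3) by presburger+
  ultimately show ?case by blast
qed

lemma beta_power_Im_coprime: "\<exists>x y. \<beta> ^ m = Complex (of_int x) (of_int y) \<and> coprime y (5 ^ m)"
proof (cases "m = 0")
  case True
  then show ?thesis by (intro exI[of _ 1] exI[of _ 0]) (simp add: complex_eq_iff)
next
  case False
  then obtain x y :: int where xy: "\<beta> ^ m = Complex x y" "5 dvd y - 2 * x" "\<not> 5 dvd x"
    using beta_power_coords_mod_5 by (metis less_one not_le)
  have "\<not> 5 dvd y"
    using xy(2,3) by presburger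
  then have "coprime y 5"
    using prime_imp_coprime[of "5::int" y] by (simp add: coprime_commute)
  then show ?thesis
    using xy(1) by auto
qed

lemma beta_power_mult_cnj: "\<beta> ^ m * cnj \<beta> ^ m = 5 ^ m"
proof -
  have "\<beta> * cnj \<beta> = 5" by (simp add: complex_eq_iff)
  then show ?thesis by (metis power_mult_distrib)
qed

lemma of_int_mem_beta_power_ideal_iff: "of_int k \<in> PIdl\<^bsub>gauss_ring\<^esub> (\<beta> ^ m) \<longleftrightarrow> 5 ^ m dvd k"
proof
  assume "of_int k \<in> PIdl\<^bsub>gauss_ring\<^esub> (\<beta> ^ m)"
  then obtain w where w: "w \<in> carrier gauss_ring" "of_int k = w * \<beta> ^ m"
    by (auto simp: gauss_PIdl_iff)
  obtain p q :: int where pq: "w = Complex p q"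
    using w(1) by (rule gauss_ringE)
  obtain x y :: int where xy: "\<beta> ^ m = Complex x y" "coprime y (5 ^ m)"
    using beta_power_Im_coprime by blast
  have "of_int k * cnj (\<beta> ^ m) = w * 5 ^ m"
    using w(2) beta_power_mult_cnj by (simp add: complex_cnj_power mult.assoc)
  then have "of_int (- (k * y)) = (of_int (q * 5 ^ m) :: real)"
    unfolding xy(1) pq by (simp add: complex_eq_iff)
  then have "5 ^ m dvd k * y"
    by (metis dvd_minus_iff dvd_triv_right mult.commute of_int_eq_iff)
  then show "5 ^ m dvd k"
    using xy(2) by (simp add: coprime_commute coprime_dvd_mult_left_iff)
next
  assume "5 ^ m dvd k"
  then obtain t where "k = 5 ^ m * t" ..
  then have "of_int k = (of_int t * cnj \<beta> ^ m) * \<beta> ^ m"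
    using beta_power_mult_cnj by (simp add: mult_ac)
  moreover have "of_int t * cnj \<beta> ^ m \<in> carrier gauss_ring"
    by (intro gauss_ring_closed) simp_all
  ultimately show "of_int k \<in> PIdl\<^bsub>gauss_ring\<^esub> (\<beta> ^ m)"
    by (auto simp: gauss_PIdl_iff)
qed

lemma imaginary_unit_congruent_int: "\<exists>t::int. \<i> - of_int t \<in> PIdl\<^bsub>gauss_ring\<^esub> (\<beta> ^ m)"
proof -
  obtain x y :: int where xy: "\<beta> ^ m = Complex x y" "coprime y (5 ^ m)"
    using beta_power_Im_coprime by blast
  obtain u v :: int where "u * y + v * 5 ^ m = 1"
    using bezout_int[of y "5 ^ m"] xy(2) by (metis coprime_iff_gcd_eq_1)
  then have bezout: "of_int u * of_int y + of_int v * 5 ^ m = (1 :: complex)"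
    by (metis of_int_1 of_int_add of_int_mult of_int_numeral of_int_power)
  define B where "B = \<beta> ^ m"
  define C where "C = cnj \<beta> ^ m"
  have BC: "B * C = 5 ^ m"
    unfolding B_def C_def by (rule beta_power_mult_cnj)
  have B: "B = of_int x + \<i> * of_int y"
    unfolding B_def xy(1) by (simp add: complex_eq_iff)
  have "(of_int u + \<i> * of_int v * C) * B = of_int u * B + \<i> * of_int v * (B * C)"
    by (simp add: algebra_simps)
  also have "\<dots> = of_int u * of_int x + \<i> * (of_int u * of_int y + of_int v * 5 ^ m)"
    unfolding BC unfolding B by (simp add: algebra_simps)
  also have "\<dots> = \<i> - of_int (- u * x)"
    unfolding bezout by simp
  finally have "\<i> - of_int (- u * x) = (of_int u + \<i> * of_int v * C) * B" ..
  moreover have "of_int u + \<i> * of_int v * C \<in> carrier gauss_ring"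
    unfolding C_def by (intro gauss_ring_closed) simp_all
  ultimately show ?thesis
    unfolding B_def gauss_PIdl_iff by blast
qed

lemma gauss_congruent_int:
  assumes "z \<in> carrier gauss_ring"
  shows "\<exists>k::int. z - of_int k \<in> PIdl\<^bsub>gauss_ring\<^esub> (\<beta> ^ m)"
proof -
  obtain u v :: int where z: "z = Complex u v"
    using assms by (rule gauss_ringE)
  obtain t :: int and w where w: "w \<in> carrier gauss_ring" "\<i> - of_int t = w * \<beta> ^ m"
    using imaginary_unit_congruent_int[of m] by (auto simp: gauss_PIdl_iff)
  have "z - of_int (u + v * t) = of_int v * (\<i> - of_int t)"
    unfolding z by (simp add: complex_eq_iff)
  also have "\<dots> = (of_int v * w) * \<beta> ^ m"
    unfolding w(2) by (simp add: mult.assoc)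
  finally have "z - of_int (u + v * t) = (of_int v * w) * \<beta> ^ m" .
  moreover have "of_int v * w \<in> carrier gauss_ring"
    using w(1) by (intro gauss_ring_closed) simp_all
  ultimately show ?thesis
    unfolding gauss_PIdl_iff by blast
qed

lemma gauss_power_ideal_chain: "ideal_chain gauss_ring (\<lambda>m. PIdl\<^bsub>gauss_ring\<^esub> (\<beta> ^ m))"
proof (intro ideal_chain.intro ideal_chain_axioms.intro gauss_ring_cring)
  show "ideal (PIdl\<^bsub>gauss_ring\<^esub> (\<beta> ^ m)) gauss_ring" for m
    by (intro cring.cgenideal_ideal[OF gauss_ring_cring] gauss_ring_closed) simp_all
  show "PIdl\<^bsub>gauss_ring\<^esub> (\<beta> ^ Suc m) \<subseteq> PIdl\<^bsub>gauss_ring\<^esub> (\<beta> ^ m)" for m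
  proof
    fix z assume "z \<in> PIdl\<^bsub>gauss_ring\<^esub> (\<beta> ^ Suc m)"
    then obtain x where "x \<in> carrier gauss_ring" "z = (x * \<beta>) * \<beta> ^ m"
      by (auto simp: gauss_PIdl_iff mult_ac)
    moreover have "x * \<beta> \<in> carrier gauss_ring" if "x \<in> carrier gauss_ring" for x
      using that by (intro gauss_ring_closed) simp_all
    ultimately show "z \<in> PIdl\<^bsub>gauss_ring\<^esub> (\<beta> ^ m)"
      by (auto simp: gauss_PIdl_iff)
  qed
qed

lemma of_int_ideal_chain_hom:
  "ideal_chain_hom \<Z> (\<lambda>m. PIdl\<^bsub>\<Z>\<^esub> (5 ^ m)) gauss_ring (\<lambda>m. PIdl\<^bsub>gauss_ring\<^esub> (\<beta> ^ m)) of_int"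
proof (intro ideal_chain_hom.intro ideal_chain_hom_axioms.intro int_power_ideal_chain gauss_power_ideal_chain
    ring_hom_cringI int_is_cring gauss_ring_cring ring_hom_memI)
  show "\<exists>k\<in>carrier \<Z>. z \<ominus>\<^bsub>gauss_ring\<^esub> of_int k \<in> PIdl\<^bsub>gauss_ring\<^esub> (\<beta> ^ m)"
    if "z \<in> carrier gauss_ring" for z m
    using gauss_congruent_int[OF that] that by simp
qed (simp_all add: of_int_mem_beta_power_ideal_iff)

lemma R_m_beta_iso_int_quotient: "R_m \<beta> m \<simeq> \<Z> Quot PIdl\<^bsub>\<Z>\<^esub> (5 ^ m)"
  using ring_iso_sym[OF ideal.quotient_is_ring[OF int.cgenideal_ideal]
      ideal_chain_hom.quotient_iso[OF of_int_ideal_chain_hom]]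
  unfolding R_m_def by simp

lemma R_m_beta_1_iso_ZFact: "R_m \<beta> 1 \<simeq> ZFact 5"
  using R_m_beta_iso_int_quotient[of 1]
  unfolding ZFact_def int.cgenideal_eq_genideal[OF UNIV_I, symmetric] by simp

lemma R_m_beta_1_field: "field (R_m \<beta> 1)"
proof (rule field_ring_iso[OF ZFact_prime_field])
  show "ring (R_m \<beta> 1)"
    unfolding R_m_def by (rule ideal.quotient_is_ring[OF ideal_chain.ideal_chain[OF gauss_power_ideal_chain]])
  then show "ZFact 5 \<simeq> R_m \<beta> 1"
    using R_m_beta_1_iso_ZFact by (rule ring_iso_sym)
qed simp

lemma R_m_beta_iso_Z5_quotient: "R_m \<beta> m \<simeq> Z5 Quot PIdl\<^bsub>Z5\<^esub> (Z5_of_int (5 ^ m))"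
  using ring_iso_trans[OF R_m_beta_iso_int_quotient padic_quotient_iso[of 5 m]]
  unfolding Z5_def Z5_of_int_def by simp

lemma invlim_beta_iso_Z5: "invlim gauss_ring (\<lambda>m. PIdl\<^bsub>gauss_ring\<^esub> (\<beta> ^ m)) \<simeq> Z5"
  using ring_iso_sym[OF ideal_chain.invlim_ring[OF int_power_ideal_chain]
      ideal_chain_hom.invlim_iso[OF of_int_ideal_chain_hom]]
  unfolding Z5_def .

section \<open>Digit expansions in base \<open>1 + 2i\<close>\<close>

lemma digit_rep_iff_lessThan:
  assumes "\<forall>k\<ge>N. a k = 0"
  shows "digit_rep c a z \<longleftrightarrow> (\<forall>k. a k \<in> mu4_0) \<and> z = (\<Sum>k<N. a k * c ^ k)"
proof -
  have support: "{k. a k \<noteq> 0} \<subseteq> {..<N}"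
    using assms not_le by auto
  then have "(\<Sum>k<N. a k * c ^ k) = (\<Sum>k\<in>{k. a k \<noteq> 0}. a k * c ^ k)"
    by (intro sum.mono_neutral_right) auto
  moreover have "finite {k. a k \<noteq> 0}"
    using support finite_subset by blast
  ultimately show ?thesis
    unfolding digit_rep_def by auto
qed

lemma digit_rep_support_bounded:
  assumes "digit_rep c a z"
  obtains N where "\<forall>k\<ge>N. a k = 0"
proof -
  obtain N where "{k. a k \<noteq> 0} \<subseteq> {..<N}"
    using assms finite_nat_bounded unfolding digit_rep_def by blast
  then show thesis
    using that[of N] by force
qed

lemma Complex_mem_beta_ideal_iff:
  "Complex (of_int u) (of_int v) \<in> PIdl\<^bsub>gauss_ring\<^esub> \<beta> \<longleftrightarrow> 5 dvd u + 2 * v"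
proof
  assume "Complex (of_int u) (of_int v) \<in> PIdl\<^bsub>gauss_ring\<^esub> \<beta>"
  then obtain w where w: "w \<in> carrier gauss_ring" "Complex (of_int u) (of_int v) = w * \<beta>"
    by (auto simp: gauss_PIdl_iff)
  obtain p q :: int where pq: "w = Complex p q"
    using w(1) by (rule gauss_ringE)
  have "of_int u = (of_int (p - 2 * q) :: real)" "of_int v = (of_int (2 * p + q) :: real)"
    using w(2) unfolding pq by (simp_all add: complex_eq_iff)
  then have "u = p - 2 * q" "v = 2 * p + q"
    by (simp_all only: of_int_eq_iff)
  then have "u + 2 * v = 5 * p"
    by simp
  then show "5 dvd u + 2 * v" by simp
next
  assume "5 dvd u + 2 * v"
  then obtain p where p: "u + 2 * v = 5 * p" ..
  define q where "q = v - 2 * p"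
  have "u = p - 2 * q" "v = 2 * p + q"
    using p by (simp_all add: q_def)
  then have "Complex (of_int u) (of_int v) = Complex (of_int p) (of_int q) * \<beta>"
    by (simp add: complex_eq_iff)
  moreover have "Complex (of_int p) (of_int q) \<in> carrier gauss_ring"
    by simp
  ultimately show "Complex (of_int u) (of_int v) \<in> PIdl\<^bsub>gauss_ring\<^esub> \<beta>"
    unfolding gauss_PIdl_iff by blast
qed

definition digit_coords :: "(int \<times> int) set" where
  "digit_coords = {(0, 0), (1, 0), (0, 1), (-1, 0), (0, -1)}"

lemma mu4_0_eq_image: "mu4_0 = (\<lambda>(x, y). Complex (of_int x) (of_int y)) ` digit_coords"
  by (simp add: mu4_0_def digit_coords_def Complex_eq)

lemma mu4_0E:
  assumes "d \<in> mu4_0"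
  obtains x y where "d = Complex (of_int x) (of_int y)" "(x, y) \<in> digit_coords"
proof -
  obtain p where p: "p \<in> digit_coords"
    "d = (\<lambda>(x, y). Complex (of_int x) (of_int y)) p"
    using assms unfolding mu4_0_eq_image by (rule imageE)
  obtain x y where "p = (x, y)"
    by (cases p)
  then show thesis
    using p that by simp
qed

lemma digits_incongruent:
  assumes "d \<in> mu4_0" "d' \<in> mu4_0" "d - d' \<in> PIdl\<^bsub>gauss_ring\<^esub> \<beta>"
  shows "d = d'"
proof -
  obtain x y x' y' where d: "d = Complex (of_int x) (of_int y)" "(x, y) \<in> digit_coords"
    and d': "d' = Complex (of_int x') (of_int y')" "(x', y') \<in> digit_coords"
    using mu4_0E[OF assms(1)] mu4_0E[OF assms(2)] by metis
  have "d - d' = Complex (of_int (x - x')) (of_int (y - y'))"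
    unfolding d d' by (simp add: complex_eq_iff)
  then have "5 dvd (x - x') + 2 * (y - y')"
    using assms(3) Complex_mem_beta_ideal_iff by metis
  then have "x = x' \<and> y = y'"
    using d(2) d'(2) by (auto simp: digit_coords_def)
  then show ?thesis
    unfolding d d' by simp
qed

lemma digit_congruent_exists:
  assumes "z \<in> carrier gauss_ring"
  shows "\<exists>d\<in>mu4_0. z - d \<in> PIdl\<^bsub>gauss_ring\<^esub> \<beta>"
proof -
  obtain u v :: int where z: "z = Complex u v"
    using assms by (rule gauss_ringE)
  have "\<exists>x y. (x, y) \<in> digit_coords \<and> 5 dvd (u - x) + 2 * (v - y)"
    unfolding digit_coords_def by simp presburger
  then obtain x y where xy: "(x, y) \<in> digit_coords" "5 dvd (u - x) + 2 * (v - y)"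
    by blast
  have "Complex (of_int x) (of_int y) \<in> mu4_0"
    unfolding mu4_0_eq_image using xy(1) by force
  moreover have "z - Complex (of_int x) (of_int y) = Complex (of_int (u - x)) (of_int (v - y))"
    unfolding z by (simp add: complex_eq_iff)
  then have "z - Complex (of_int x) (of_int y) \<in> PIdl\<^bsub>gauss_ring\<^esub> \<beta>"
    using xy(2) Complex_mem_beta_ideal_iff by metis
  ultimately show ?thesis by blast
qed

lemma mu4_0_subset_gauss_ring: "mu4_0 \<subseteq> carrier gauss_ring"
  by (auto simp: mu4_0_def)

lemma digit_quotient_norm_less:
  assumes "z \<in> carrier gauss_ring" "z \<noteq> 0" "d \<in> mu4_0" "z = d + \<beta> * w"
  shows "cmod w < cmod z"
proof -
  have norm_beta: "cmod \<beta> = sqrt 5"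
    by (simp add: cmod_def)
  have "sqrt 5 * cmod w = cmod (z - d)"
    using assms(4) by (simp add: norm_mult norm_beta)
  also have "\<dots> \<le> cmod z + cmod d"
    by (rule norm_triangle_ineq4)
  also have "\<dots> \<le> 2 * cmod z"
    using assms(3) gauss_ring_norm_ge_1[OF assms(1,2)] by (auto simp: mu4_0_def)
  also have "\<dots> < sqrt 5 * cmod z"
    using assms(2) real_less_rsqrt[of 2 5] by simp
  finally show ?thesis
    by simp
qed

lemma norm_square_floor_less:
  assumes "w \<in> carrier gauss_ring" "z \<in> carrier gauss_ring" "cmod w < cmod z"
  shows "nat \<lfloor>(cmod w)\<^sup>2\<rfloor> < nat \<lfloor>(cmod z)\<^sup>2\<rfloor>"
proof -
  have "(cmod x)\<^sup>2 \<in> \<int>" if "x \<in> carrier gauss_ring" for x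
    using that by (auto simp: cmod_power2 intro: Ints_add Ints_power)
  then obtain a c where a: "(cmod w)\<^sup>2 = of_int a" and c: "(cmod z)\<^sup>2 = of_int c"
    using assms(1,2) by (metis Ints_cases)
  have "(cmod w)\<^sup>2 < (cmod z)\<^sup>2"
    using assms(3) by (simp add: power_strict_mono)
  then have "a < c"
    unfolding a c by simp
  moreover have "0 \<le> a"
    using a by (metis of_int_0_le_iff zero_le_power2)
  ultimately show ?thesis
    unfolding a c by simp
qed

lemma sum_lessThan_Suc_expansion:
  fixes c :: "'a::comm_semiring_1"
  shows "(\<Sum>k<Suc N. a k * c ^ k) = a 0 + c * (\<Sum>k<N. a (Suc k) * c ^ k)"
  unfolding sum.lessThan_Suc_shift by (simp add: sum_distrib_left mult_ac)

lemma beta_expansion_exists: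
  assumes "z \<in> carrier gauss_ring"
  shows "\<exists>a N. (\<forall>k. a k \<in> mu4_0) \<and> (\<forall>k\<ge>N. a k = 0) \<and> z = (\<Sum>k<N. a k * \<beta> ^ k)"
  using assms
proof (induction z rule: measure_induct_rule[of "\<lambda>z. nat \<lfloor>(cmod z)\<^sup>2\<rfloor>"])
  case (less z)
  show ?case
  proof (cases "z = 0")
    case True
    then show ?thesis
      by (intro exI[of _ "\<lambda>_. 0"] exI[of _ 0]) (simp add: mu4_0_def)
  next
    case False
    obtain d w where d: "d \<in> mu4_0" and w: "w \<in> carrier gauss_ring" "z - d = w * \<beta>"
      using digit_congruent_exists[OF less.prems] unfolding gauss_PIdl_iff by blast
    have z: "z = d + \<beta> * w"
      using w(2) by (simp add: algebra_simps)
    have "cmod w < cmod z"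
      by (rule digit_quotient_norm_less[OF less.prems False d z])
    then obtain a N where a: "\<forall>k. a k \<in> mu4_0" "\<forall>k\<ge>N. a k = 0" "w = (\<Sum>k<N. a k * \<beta> ^ k)"
      using less.IH[OF norm_square_floor_less[OF w(1) less.prems]] w(1) by blast
    have "z = (\<Sum>k<Suc N. case_nat d a k * \<beta> ^ k)"
      unfolding sum_lessThan_Suc_expansion using z a(3) by simp
    moreover have "\<forall>k. case_nat d a k \<in> mu4_0"
      using d a(1) by (simp split: nat.split)
    moreover have "\<forall>k\<ge>Suc N. case_nat d a k = 0"
      using a(2) by (auto split: nat.split)
    ultimately show ?thesis
      by blast
  qed
qed

lemma digit_sum_in_gauss_ring:
  assumes "\<forall>k. a k \<in> mu4_0"
  shows "(\<Sum>k<N. a k * \<beta> ^ k) \<in> carrier gauss_ring"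
proof (rule gauss_ring_sum_closed)
  fix k
  have "a k \<in> carrier gauss_ring"
    using assms mu4_0_subset_gauss_ring by blast
  moreover have "\<beta> ^ k \<in> carrier gauss_ring"
    by (rule gauss_ring_closed(3)) simp
  ultimately show "a k * \<beta> ^ k \<in> carrier gauss_ring"
    by (rule gauss_ring_closed(2))
qed

lemma beta_expansion_unique:
  assumes "\<forall>k. a k \<in> mu4_0" "\<forall>k. a' k \<in> mu4_0" "\<forall>k\<ge>N. a k = 0" "\<forall>k\<ge>N. a' k = 0"
    and "(\<Sum>k<N. a k * \<beta> ^ k) = (\<Sum>k<N. a' k * \<beta> ^ k)"
  shows "a = a'"
  using assms
proof (induction N arbitrary: a a')
  case 0
  then show ?case by auto
next
  case (Suc N)
  define S where "S = (\<Sum>k<N. a (Suc k) * \<beta> ^ k)"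
  define S' where "S' = (\<Sum>k<N. a' (Suc k) * \<beta> ^ k)"
  have "S \<in> carrier gauss_ring"
    unfolding S_def by (rule digit_sum_in_gauss_ring) (simp add: Suc.prems(1))
  have "S' \<in> carrier gauss_ring"
    unfolding S'_def by (rule digit_sum_in_gauss_ring) (simp add: Suc.prems(2))
  have sums: "a 0 + \<beta> * S = a' 0 + \<beta> * S'"
    using Suc.prems(5) unfolding S_def S'_def sum_lessThan_Suc_expansion .
  then have "a 0 - a' 0 = (S' - S) * \<beta>"
    by (simp add: algebra_simps)
  moreover have "S' - S \<in> carrier gauss_ring"
    using \<open>S \<in> carrier gauss_ring\<close> \<open>S' \<in> carrier gauss_ring\<close> by simp
  ultimately have "a 0 - a' 0 \<in> PIdl\<^bsub>gauss_ring\<^esub> \<beta>"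
    unfolding gauss_PIdl_iff by blast
  then have digit: "a 0 = a' 0"
    using digits_incongruent Suc.prems(1,2) by blast
  moreover have "\<beta> \<noteq> 0"
    by (simp add: complex_eq_iff)
  ultimately have "S = S'"
    using sums by simp
  then have "(\<lambda>k. a (Suc k)) = (\<lambda>k. a' (Suc k))"
    using Suc.prems(1-4) by (intro Suc.IH) (auto simp: S_def S'_def)
  then show "a = a'"
    using digit by (metis fun_eq_iff not0_implies_Suc)
qed

theorem beta_digit_rep_ex1: "z \<in> carrier gauss_ring \<Longrightarrow> \<exists>!a. digit_rep \<beta> a z"
proof (rule ex_ex1I)
  assume "z \<in> carrier gauss_ring"
  then obtain a N where "\<forall>k. a k \<in> mu4_0" "\<forall>k\<ge>N. a k = 0" "z = (\<Sum>k<N. a k * \<beta> ^ k)"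
    using beta_expansion_exists by blast
  then show "\<exists>a. digit_rep \<beta> a z"
    using digit_rep_iff_lessThan by blast
next
  fix a a' assume rep: "digit_rep \<beta> a z" "digit_rep \<beta> a' z"
  obtain N N' where "\<forall>k\<ge>N. a k = 0" "\<forall>k\<ge>N'. a' k = 0"
    using digit_rep_support_bounded rep by metis
  then have bound: "\<forall>k\<ge>max N N'. a k = 0" "\<forall>k\<ge>max N N'. a' k = 0"
    by simp_all
  have "(\<forall>k. a k \<in> mu4_0) \<and> z = (\<Sum>k<max N N'. a k * \<beta> ^ k)"
    using rep(1) digit_rep_iff_lessThan[OF bound(1)] by simp
  moreover have "(\<forall>k. a' k \<in> mu4_0) \<and> z = (\<Sum>k<max N N'. a' k * \<beta> ^ k)"
    using rep(2) digit_rep_iff_lessThan[OF bound(2)] by simp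
  ultimately show "a = a'"
    using beta_expansion_unique[OF _ _ bound] by simp
qed

lemma digits_eqI: "z \<in> carrier gauss_ring \<Longrightarrow> digit_rep \<beta> a z \<Longrightarrow> digits \<beta> z = a"
  unfolding digits_def by (rule the1_equality[OF beta_digit_rep_ex1])

lemma digits_two_digits:
  assumes "d\<^sub>0 \<in> mu4_0" "d\<^sub>1 \<in> mu4_0" "z = d\<^sub>0 + d\<^sub>1 * \<beta>"
  shows "digits \<beta> z = (\<lambda>_. 0)(0 := d\<^sub>0, 1 := d\<^sub>1)"
proof (rule digits_eqI)
  have "d\<^sub>0 \<in> carrier gauss_ring" "d\<^sub>1 \<in> carrier gauss_ring" "\<beta> \<in> carrier gauss_ring"
    using assms(1,2) mu4_0_subset_gauss_ring by auto
  then show "z \<in> carrier gauss_ring"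
    unfolding assms(3) by (metis gauss_ring_closed(1,2))
  have bound: "\<forall>k\<ge>2::nat. ((\<lambda>_. 0)(0 := d\<^sub>0, 1 := d\<^sub>1)) k = 0"
    by simp
  have "0 \<in> mu4_0"
    by (simp add: mu4_0_def)
  then show "digit_rep \<beta> ((\<lambda>_. 0)(0 := d\<^sub>0, 1 := d\<^sub>1)) z"
    unfolding digit_rep_iff_lessThan[OF bound] using assms by (auto simp: numeral_2_eq_2)
qed

lemma digits_beta_hold:
  "digits \<beta> (0 + 1) = (\<lambda>_. 0)(0 := 1)"
  "digits \<beta> (1 + 1) = (\<lambda>_. 0)(0 := \<i>, 1 := -\<i>)"
  "digits \<beta> (\<i> + 1) = (\<lambda>_. 0)(0 := -\<i>, 1 := 1)"
  "digits \<beta> (-\<i> + 1) = (\<lambda>_. 0)(0 := -1, 1 := -\<i>)"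
  "digits \<beta> (-1 + 1) = (\<lambda>_. 0)"
proof -
  have digits: "0 \<in> mu4_0" "1 \<in> mu4_0" "\<i> \<in> mu4_0" "-1 \<in> mu4_0" "-\<i> \<in> mu4_0"
    by (simp_all add: mu4_0_def)
  have "digits \<beta> (0 + 1) = (\<lambda>_. 0)(0 := 1, 1 := 0)"
    and "digits \<beta> (-1 + 1) = (\<lambda>_. 0)(0 := 0, 1 := 0)"
    by (rule digits_two_digits; simp add: digits complex_eq_iff)+
  then show "digits \<beta> (0 + 1) = (\<lambda>_. 0)(0 := 1)" "digits \<beta> (-1 + 1) = (\<lambda>_. 0)"
    by (simp_all add: fun_eq_iff)
  show "digits \<beta> (1 + 1) = (\<lambda>_. 0)(0 := \<i>, 1 := -\<i>)"
    and "digits \<beta> (\<i> + 1) = (\<lambda>_. 0)(0 := -\<i>, 1 := 1)"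
    and "digits \<beta> (-\<i> + 1) = (\<lambda>_. 0)(0 := -1, 1 := -\<i>)"
    by (rule digits_two_digits; simp add: digits complex_eq_iff)+
qed

theorem proposition6p10:
  fixes b :: complex
  assumes X_def: "b = 1 + 2 * imaginary_unit"
  shows "(\<forall>z \<in> carrier gauss_ring. \<exists>!a. digit_rep b a z)
    \<and> digits b (0 + 1) = (\<lambda>_. 0)(0 := 1)
    \<and> digits b (1 + 1) = (\<lambda>_. 0)(0 := imaginary_unit, 1 := -imaginary_unit)
    \<and> digits b (imaginary_unit + 1) = (\<lambda>_. 0)(0 := -imaginary_unit, 1 := 1)
    \<and> digits b (-imaginary_unit + 1) = (\<lambda>_. 0)(0 := -1, 1 := -imaginary_unit)
    \<and> digits b (-1 + 1) = (\<lambda>_. 0)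
    \<and> field (R_m b 1) \<and> R_m b 1 \<simeq> ZFact 5
    \<and> invlim gauss_ring (\<lambda>m. PIdl\<^bsub>gauss_ring\<^esub> (b ^ m)) \<simeq> Z5
    \<and> (\<forall>m\<ge>1. R_m b m \<simeq> Z5 Quot (PIdl\<^bsub>Z5\<^esub> (Z5_of_int (5 ^ m))))"
  unfolding X_def
  using beta_digit_rep_ex1 digits_beta_hold R_m_beta_1_field R_m_beta_1_iso_ZFact
    invlim_beta_iso_Z5 R_m_beta_iso_Z5_quotient
  by blast

end
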